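(* Let $K$ be a commutative field and $q\in K$. On $\mathcal{H}_{\mathcal{PP}}$ define the bilinear form $\langle-,-\rangle_q$ by, for plane posets $P,Q$, $$\langle P,Q\rangle_q=\begin{cases}q^{\phi(P,Q)}&\text{if }\iota(P)\leq Q,\\ 0&\text{otherwise,}\end{cases}$$ where, for $P,Q$ of the same cardinality, $$\phi(P,Q)=\sharp\{(x,y)\in P^2\mid x<_r y\text{ and }\theta_{P,Q}(x)<_h\theta_{P,Q}(y)\}+\sharp\{(x,y)\in P^2\mid x<_h y\text{ and }\theta_{P,Q}(x)<_r\theta_{P,Q}(y)\}$$ (with $q^0=1$). Then $\langle-,-\rangle_q$ is symmetric and is a Hopf pairing on $(\mathcal{H}_{\mathcal{PP}},m,\Delta_q)$, i.e. $\langle xy,z\rangle_q=\langle x\otimes y,\Delta_q(z)\rangle_q$ for all $x,y,z\in\mathcal{H}_{\mathcal{PP}}$ (where $\langle a\otimes b,c\otimes d\rangle_q=\langle a,c\rangle_q\langle b,d\rangle_q$). Moreover, it is nondegenerate if and only if $q\neq 0$.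
   Context: A plane poset is a finite set with two partial orders $\leq_h,\leq_r$ such that two distinct elements are $\leq_h$-comparable iff they are not $\leq_r$-comparable, considered up to isomorphism; $\mathcal{H}_{\mathcal{PP}}$ is the $K$-vector space with basis the isomorphism classes of plane posets, the empty one denoted $1$. On a plane poset, $x\leq y$ iff ($x\leq_h y$ or $x\leq_r y$) is a total order (known fact). For $P,Q$ of the same cardinality, $\theta_{P,Q}$ is the increasing bijection $P\to Q$, and $P\leq Q$ means: for all $x,y\in P$, $\theta_{P,Q}(x)\leq_h\theta_{P,Q}(y)$ in $Q$ implies $x\leq_h y$ in $P$ ($\leq$ only holds between posets of equal cardinality). $\iota(P)=(P,\leq_r,\leq_h)$. The product $m$: $PQ$ is the plane poset on $P\sqcup Q$ with $P,Q$ plane subposets, no $\leq_h$-comparability between $P$ and $Q$, and $x<_r y$ for $x\in P,y\in Q$, extended bilinearly. A biideal of $P$ is a subset $I$ with $x\in I$ and ($x\leq_h y$ or $x\leq_r y$) implying $y\in I$. The coproduct is $\Delta_q(P)=\sum_{I\text{ biideal of }P}q^{h(P\setminus I,I)}(P\setminus I)\otimes I$ with $h(A,B)=\sharp\{(x,y)\in A\times B\mid x<_h y\}$, $P\setminus I$ and $I$ carrying the restricted orders. *)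

theory Defs
  imports Main "HOL-Library.Poly_Mapping"
begin

type_synonym ppos = "nat set \<times> nat rel \<times> nat rel"

definition car :: "ppos \<Rightarrow> nat set" where "car P = fst P"
definition relh :: "ppos \<Rightarrow> nat rel" where "relh P = fst (snd P)"
definition relr :: "ppos \<Rightarrow> nat rel" where "relr P = snd (snd P)"

definition plane_poset :: "ppos \<Rightarrow> bool" where
  "plane_poset P \<longleftrightarrow> finite (car P) \<and>
     partial_order_on (car P) (relh P) \<and> partial_order_on (car P) (relr P) \<and>
     (\<forall>x\<in>car P. \<forall>y\<in>car P. x \<noteq> y \<longrightarrow>
        (((x,y) \<in> relh P \<or> (y,x) \<in> relh P) \<longleftrightarrow> \<not> ((x,y) \<in> relr P \<or> (y,x) \<in> relr P)))"

definition lth :: "ppos \<Rightarrow> nat \<Rightarrow> nat \<Rightarrow> bool" where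
  "lth P x y \<longleftrightarrow> (x,y) \<in> relh P \<and> x \<noteq> y"
definition ltr :: "ppos \<Rightarrow> nat \<Rightarrow> nat \<Rightarrow> bool" where
  "ltr P x y \<longleftrightarrow> (x,y) \<in> relr P \<and> x \<noteq> y"

definition tle :: "ppos \<Rightarrow> nat \<Rightarrow> nat \<Rightarrow> bool" where
  "tle P x y \<longleftrightarrow> (x,y) \<in> relh P \<or> (x,y) \<in> relr P"

definition pp_iso :: "ppos \<Rightarrow> ppos \<Rightarrow> bool" where
  "pp_iso P Q \<longleftrightarrow> (\<exists>f. bij_betw f (car P) (car Q) \<and>
     (\<forall>x\<in>car P. \<forall>y\<in>car P. ((x,y) \<in> relh P \<longleftrightarrow> (f x, f y) \<in> relh Q) \<and>
                             ((x,y) \<in> relr P \<longleftrightarrow> (f x, f y) \<in> relr Q)))"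

text \<open>theta_{P,Q}: the increasing bijection P \<rightarrow> Q (relevant only on car P).\<close>
definition theta :: "ppos \<Rightarrow> ppos \<Rightarrow> nat \<Rightarrow> nat" where
  "theta P Q = (SOME f. bij_betw f (car P) (car Q) \<and>
      (\<forall>x\<in>car P. \<forall>y\<in>car P. tle P x y \<longrightarrow> tle Q (f x) (f y)))"

definition pp_le :: "ppos \<Rightarrow> ppos \<Rightarrow> bool" where
  "pp_le P Q \<longleftrightarrow> card (car P) = card (car Q) \<and>
     (\<forall>x\<in>car P. \<forall>y\<in>car P. (theta P Q x, theta P Q y) \<in> relh Q \<longrightarrow> (x,y) \<in> relh P)"

definition iota :: "ppos \<Rightarrow> ppos" where
  "iota P = (car P, relr P, relh P)"

definition phi :: "ppos \<Rightarrow> ppos \<Rightarrow> nat" where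
  "phi P Q =
     card {(x,y) \<in> car P \<times> car P. ltr P x y \<and> lth Q (theta P Q x) (theta P Q y)}
   + card {(x,y) \<in> car P \<times> car P. lth P x y \<and> ltr Q (theta P Q x) (theta P Q y)}"

definition pp_pair :: "'k::field \<Rightarrow> ppos \<Rightarrow> ppos \<Rightarrow> 'k" where
  "pp_pair q P Q = (if pp_le (iota P) Q then q ^ phi P Q else 0)"

text \<open>Product PQ: disjoint union (P embedded via 2x, Q via 2x+1), no h-comparabilities
 between P and Q, and x <_r y for x in P, y in Q.\<close>
definition pp_prod :: "ppos \<Rightarrow> ppos \<Rightarrow> ppos" where
  "pp_prod P Q =
    ((\<lambda>x. 2*x) ` car P \<union> (\<lambda>x. 2*x+1) ` car Q,
     (\<lambda>(x,y). (2*x, 2*y)) ` relh P \<union> (\<lambda>(x,y). (2*x+1, 2*y+1)) ` relh Q,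
     (\<lambda>(x,y). (2*x, 2*y)) ` relr P \<union> (\<lambda>(x,y). (2*x+1, 2*y+1)) ` relr Q
       \<union> {(2*x, 2*y+1) | x y. x \<in> car P \<and> y \<in> car Q})"

definition biideal :: "ppos \<Rightarrow> nat set \<Rightarrow> bool" where
  "biideal P I \<longleftrightarrow> I \<subseteq> car P \<and>
     (\<forall>x\<in>I. \<forall>y\<in>car P. ((x,y) \<in> relh P \<or> (x,y) \<in> relr P) \<longrightarrow> y \<in> I)"

definition restr :: "ppos \<Rightarrow> nat set \<Rightarrow> ppos" where
  "restr P S = (S, relh P \<inter> (S \<times> S), relr P \<inter> (S \<times> S))"

definition hcount :: "ppos \<Rightarrow> nat set \<Rightarrow> nat set \<Rightarrow> nat" where
  "hcount P A B = card {(x,y) \<in> A \<times> B. lth P x y}"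

definition pp_class :: "ppos \<Rightarrow> ppos set" where
  "pp_class P = {Q. plane_poset Q \<and> pp_iso P Q}"

typedef ppc = "{pp_class P | P. plane_poset P}"
  morphisms ppc_set Abs_ppc
proof -
  have "plane_poset ({}, {}, {})"
    by (simp add: plane_poset_def car_def relh_def relr_def partial_order_on_def
        preorder_on_def refl_on_def trans_def antisym_def)
  then show ?thesis by blast
qed

definition class_of :: "ppos \<Rightarrow> ppc" where
  "class_of P = Abs_ppc (pp_class P)"

definition rep :: "ppc \<Rightarrow> ppos" where
  "rep c = (SOME P. P \<in> ppc_set c)"

text \<open>H_PP over K: finitely supported K-valued functions on isomorphism classes
 (K-vector space with basis the classes); H_PP \<otimes> H_PP: same on pairs of classes.\<close>
type_synonym 'k hpp = "ppc \<Rightarrow>\<^sub>0 'k"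
type_synonym 'k hpp2 = "(ppc \<times> ppc) \<Rightarrow>\<^sub>0 'k"

definition basis :: "ppc \<Rightarrow> 'k::field hpp" where
  "basis c = Poly_Mapping.single c 1"

definition form :: "'k::field \<Rightarrow> 'k hpp \<Rightarrow> 'k hpp \<Rightarrow> 'k" where
  "form q x y = (\<Sum>a\<in>Poly_Mapping.keys x. \<Sum>b\<in>Poly_Mapping.keys y.
      Poly_Mapping.lookup x a * Poly_Mapping.lookup y b * pp_pair q (rep a) (rep b))"

definition hmult :: "'k::field hpp \<Rightarrow> 'k hpp \<Rightarrow> 'k hpp" where
  "hmult x y = (\<Sum>a\<in>Poly_Mapping.keys x. \<Sum>b\<in>Poly_Mapping.keys y.
      Poly_Mapping.single (class_of (pp_prod (rep a) (rep b)))
        (Poly_Mapping.lookup x a * Poly_Mapping.lookup y b))"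

definition delta_basis :: "'k::field \<Rightarrow> ppc \<Rightarrow> 'k hpp2" where
  "delta_basis q c = (let P = rep c in
     \<Sum>I\<in>{I. biideal P I}.
       Poly_Mapping.single (class_of (restr P (car P - I)), class_of (restr P I))
         (q ^ hcount P (car P - I) I))"

definition delta :: "'k::field \<Rightarrow> 'k hpp \<Rightarrow> 'k hpp2" where
  "delta q z = (\<Sum>a\<in>Poly_Mapping.keys z.
      Poly_Mapping.map (\<lambda>t. Poly_Mapping.lookup z a * t) (delta_basis q a))"

definition tform :: "'k::field \<Rightarrow> 'k hpp \<Rightarrow> 'k hpp \<Rightarrow> 'k hpp2 \<Rightarrow> 'k" where
  "tform q x y t = (\<Sum>cd\<in>Poly_Mapping.keys t.
      Poly_Mapping.lookup t cd * form q x (basis (fst cd)) * form q y (basis (snd cd)))"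

definition nondegenerate :: "'k::field \<Rightarrow> bool" where
  "nondegenerate q \<longleftrightarrow>
     (\<forall>x::'k hpp. (\<forall>y. form q x y = 0) \<longrightarrow> x = 0) \<and>
     (\<forall>y::'k hpp. (\<forall>x. form q x y = 0) \<longrightarrow> y = 0)"

end

theory Submission
  imports Defs
begin

text \<open>Listing a plane poset of size n along its total order identifies it with {0..<n}, and
  it is then determined up to isomorphism by n and its h-code: the set of positions (i,j),
  i < j, of h-related elements, every other such pair being r-related. The pairing is
  q^(|hcode P| + |hcode Q|) when P and Q have equal size and disjoint h-codes, and 0
  otherwise; in particular it is symmetric. The product PQ has the h-code of P followed by
  the shifted h-code of Q. Biideals are final segments of the total order, so in
  Delta_q(Z) only the term cutting Z after its first |P| elements can pair with P (x) Q, and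
  its factor q^h supplies exactly the h-relations of Z across the cut. For nondegeneracy,
  pairing with iota of a support element of smallest h-code isolates it; for q = 0 the
  two-element h-chain pairs to 0 with everything.\<close>

section \<open>Ranks in the total order\<close>

context
  fixes P :: ppos
  assumes P: "plane_poset P"
begin

lemma plane_poset_finite: "finite (car P)"
  and relh_in_car: "(x,y) \<in> relh P \<Longrightarrow> x \<in> car P \<and> y \<in> car P"
  and relr_in_car: "(x,y) \<in> relr P \<Longrightarrow> x \<in> car P \<and> y \<in> car P"
  and relh_refl: "x \<in> car P \<Longrightarrow> (x,x) \<in> relh P"
  and relr_refl: "x \<in> car P \<Longrightarrow> (x,x) \<in> relr P"
  and relh_trans: "(x,y) \<in> relh P \<Longrightarrow> (y,z) \<in> relh P \<Longrightarrow> (x,z) \<in> relh P"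
  and relr_trans: "(x,y) \<in> relr P \<Longrightarrow> (y,z) \<in> relr P \<Longrightarrow> (x,z) \<in> relr P"
  and relh_antisym: "(x,y) \<in> relh P \<Longrightarrow> (y,x) \<in> relh P \<Longrightarrow> x = y"
  and relr_antisym: "(x,y) \<in> relr P \<Longrightarrow> (y,x) \<in> relr P \<Longrightarrow> x = y"
  using P unfolding plane_poset_def partial_order_on_def preorder_on_def refl_on_def
  by (auto dest: transD antisymD)

lemma relh_relr_comparable_iff:
  "x \<in> car P \<Longrightarrow> y \<in> car P \<Longrightarrow> x \<noteq> y \<Longrightarrow>
    ((x,y) \<in> relh P \<or> (y,x) \<in> relh P) \<longleftrightarrow> \<not> ((x,y) \<in> relr P \<or> (y,x) \<in> relr P)"
  using P unfolding plane_poset_def by blast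

lemma relh_not_relr:
  "x \<noteq> y \<Longrightarrow> (x,y) \<in> relh P \<or> (y,x) \<in> relh P \<Longrightarrow> (x,y) \<notin> relr P \<and> (y,x) \<notin> relr P"
  using relh_relr_comparable_iff relh_in_car by metis

lemma relh_or_relr:
  "x \<in> car P \<Longrightarrow> y \<in> car P \<Longrightarrow> x \<noteq> y \<Longrightarrow>
    (x,y) \<in> relh P \<or> (y,x) \<in> relh P \<or> (x,y) \<in> relr P \<or> (y,x) \<in> relr P"
  using relh_relr_comparable_iff by metis

lemma tle_in_car: "tle P x y \<Longrightarrow> x \<in> car P \<and> y \<in> car P"
  unfolding tle_def using relh_in_car relr_in_car by blast

lemma tle_refl: "x \<in> car P \<Longrightarrow> tle P x x"
  unfolding tle_def using relh_refl by blast

lemma tle_antisym: "tle P x y \<Longrightarrow> tle P y x \<Longrightarrow> x = y"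
  unfolding tle_def using relh_antisym relr_antisym relh_not_relr by metis

lemma tle_total: "x \<in> car P \<Longrightarrow> y \<in> car P \<Longrightarrow> tle P x y \<or> tle P y x"
  unfolding tle_def using relh_or_relr relh_refl by metis

lemma tle_trans:
  assumes xy: "tle P x y" and yz: "tle P y z"
  shows "tle P x z"
proof (rule ccontr)
  assume nxz: "\<not> tle P x z"
  have "x \<in> car P" "z \<in> car P" using tle_in_car xy yz by auto
  then have "tle P z x" "x \<noteq> z" "x \<noteq> y" "y \<noteq> z"
    using tle_total tle_refl nxz xy yz by auto
  with xy yz show False unfolding tle_def
    using relh_trans relr_trans relh_not_relr relh_antisym relr_antisym by metis
qed

end

definition tlt :: "ppos \<Rightarrow> nat \<Rightarrow> nat \<Rightarrow> bool" where
  "tlt P x y \<longleftrightarrow> tle P x y \<and> x \<noteq> y"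

definition rank :: "ppos \<Rightarrow> nat \<Rightarrow> nat" where
  "rank P x = card {y \<in> car P. tlt P y x}"

context
  fixes P :: ppos
  assumes P: "plane_poset P"
begin

lemma tlt_trans: "tlt P x y \<Longrightarrow> tlt P y z \<Longrightarrow> tlt P x z"
  unfolding tlt_def using tle_trans[OF P] tle_antisym[OF P] by metis

lemma rank_strict_mono:
  assumes xy: "tlt P x y"
  shows "rank P x < rank P y"
proof -
  have "{z \<in> car P. tlt P z x} \<subset> {z \<in> car P. tlt P z y}"
  proof
    show "{z \<in> car P. tlt P z x} \<subseteq> {z \<in> car P. tlt P z y}" using tlt_trans xy by blast
    have "x \<in> car P" using xy tle_in_car[OF P] unfolding tlt_def by blast
    then show "{z \<in> car P. tlt P z x} \<noteq> {z \<in> car P. tlt P z y}" using xy by (auto simp: tlt_def)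
  qed
  then show ?thesis unfolding rank_def using plane_poset_finite[OF P] by (simp add: psubset_card_mono)
qed

lemma rank_less_iff:
  assumes x: "x \<in> car P" and y: "y \<in> car P"
  shows "rank P x < rank P y \<longleftrightarrow> tlt P x y"
proof
  assume less: "rank P x < rank P y"
  show "tlt P x y"
  proof (rule ccontr)
    assume "\<not> tlt P x y"
    then have "y = x \<or> tlt P y x" using tle_total[OF P x y] unfolding tlt_def by auto
    then have "rank P y \<le> rank P x" using rank_strict_mono[of y x] by (cases "y = x") auto
    then show False using less by simp
  qed
qed (rule rank_strict_mono)

lemma tle_iff_not_tlt: "x \<in> car P \<Longrightarrow> y \<in> car P \<Longrightarrow> tle P x y \<longleftrightarrow> \<not> tlt P y x"
  unfolding tlt_def using tle_total[OF P, of x y] tle_antisym[OF P, of x y] tle_refl[OF P, of x]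
  by blast

lemma rank_le_iff: "x \<in> car P \<Longrightarrow> y \<in> car P \<Longrightarrow> rank P x \<le> rank P y \<longleftrightarrow> tle P x y"
  by (simp add: tle_iff_not_tlt rank_less_iff flip: not_less)

lemma inj_on_rank: "inj_on (rank P) (car P)"
proof (rule inj_onI)
  fix x y assume "x \<in> car P" "y \<in> car P" "rank P x = rank P y"
  then have "tle P x y" "tle P y x" using rank_le_iff by (metis order_refl)+
  then show "x = y" by (rule tle_antisym[OF P])
qed

lemma rank_eq_iff: "x \<in> car P \<Longrightarrow> y \<in> car P \<Longrightarrow> rank P x = rank P y \<longleftrightarrow> x = y"
  using inj_on_rank by (auto dest: inj_onD)

lemma rank_less_card: "x \<in> car P \<Longrightarrow> rank P x < card (car P)"
  unfolding rank_def
  by (rule psubset_card_mono) (auto simp: plane_poset_finite[OF P] tlt_def)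

lemma bij_betw_rank: "bij_betw (rank P) (car P) {..<card (car P)}"
proof -
  have "rank P ` car P \<subseteq> {..<card (car P)}" using rank_less_card by auto
  moreover have "card (rank P ` car P) = card {..<card (car P)}"
    using card_image[OF inj_on_rank] by simp
  ultimately show ?thesis
    using inj_on_rank by (simp add: bij_betw_def card_subset_eq)
qed

lemma rank_surj: "i < card (car P) \<Longrightarrow> \<exists>x\<in>car P. rank P x = i"
  using bij_betw_rank by (metis bij_betw_def imageE lessThan_iff)

end

lemma rank_monotone_bij:
  assumes P: "plane_poset P" and Q: "plane_poset Q" and f: "bij_betw f (car P) (car Q)"
    and mono: "\<And>x y. x \<in> car P \<Longrightarrow> y \<in> car P \<Longrightarrow> tle P x y \<Longrightarrow> tle Q (f x) (f y)"
    and x: "x \<in> car P"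
  shows "rank Q (f x) = rank P x"
proof -
  have "{y \<in> car Q. tlt Q y (f x)} = f ` {y \<in> car P. tlt P y x}"
  proof (intro equalityI subsetI)
    fix u assume u: "u \<in> {y \<in> car Q. tlt Q y (f x)}"
    then obtain y where y: "y \<in> car P" "u = f y" using f by (auto simp: bij_betw_def)
    have "\<not> tle P x y"
      using mono[OF x y(1)] u y tle_antisym[OF Q] unfolding tlt_def by auto
    then have "tlt P y x" using tle_total[OF P x y(1)] unfolding tlt_def by auto
    then show "u \<in> f ` {y \<in> car P. tlt P y x}" using y by auto
  next
    fix u assume "u \<in> f ` {y \<in> car P. tlt P y x}"
    then obtain y where y: "y \<in> car P" "tlt P y x" "u = f y" by auto
    have "f y \<noteq> f x" using f y x unfolding tlt_def bij_betw_def by (meson inj_onD)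
    then show "u \<in> {y \<in> car Q. tlt Q y (f x)}"
      using mono[OF y(1) x] y f unfolding tlt_def bij_betw_def by auto
  qed
  moreover have "inj_on f {y \<in> car P. tlt P y x}"
    using f by (auto simp: bij_betw_def intro: inj_on_subset)
  ultimately show ?thesis unfolding rank_def by (simp add: card_image)
qed

text \<open>theta is a choice; an increasing bijection exists because elements of equal rank can be matched.\<close>

lemma
  assumes P: "plane_poset P" and Q: "plane_poset Q" and c: "card (car P) = card (car Q)"
  shows bij_betw_theta: "bij_betw (theta P Q) (car P) (car Q)"
    and rank_theta: "x \<in> car P \<Longrightarrow> rank Q (theta P Q x) = rank P x"
proof -
  define f where "f = (\<lambda>x. the_inv_into (car Q) (rank Q) (rank P x))"
  have bQ: "bij_betw (rank Q) (car Q) {..<card (car P)}" using bij_betw_rank[OF Q] c by simp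
  have bf: "bij_betw f (car P) (car Q)" unfolding f_def
    using bij_betw_trans[OF bij_betw_rank[OF P] bij_betw_the_inv_into[OF bQ]] by (simp add: comp_def)
  have rf: "\<And>x. x \<in> car P \<Longrightarrow> rank Q (f x) = rank P x" unfolding f_def
    using bQ rank_less_card[OF P] by (auto simp: bij_betw_def f_the_inv_into_f)
  have "\<forall>x\<in>car P. \<forall>y\<in>car P. tle P x y \<longrightarrow> tle Q (f x) (f y)"
    using rf rank_le_iff[OF P] rank_le_iff[OF Q] bf by (metis bij_betwE)
  then have "\<exists>f. bij_betw f (car P) (car Q) \<and>
      (\<forall>x\<in>car P. \<forall>y\<in>car P. tle P x y \<longrightarrow> tle Q (f x) (f y))" using bf by blast
  then have th: "bij_betw (theta P Q) (car P) (car Q) \<and>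
      (\<forall>x\<in>car P. \<forall>y\<in>car P. tle P x y \<longrightarrow> tle Q (theta P Q x) (theta P Q y))"
    unfolding theta_def by (rule someI_ex)
  then show "bij_betw (theta P Q) (car P) (car Q)" by blast
  show "x \<in> car P \<Longrightarrow> rank Q (theta P Q x) = rank P x"
    using th rank_monotone_bij[OF P Q] by blast
qed

section \<open>The h-code\<close>

definition hpairs :: "ppos \<Rightarrow> (nat \<times> nat) set" where
  "hpairs P = {(x,y) \<in> car P \<times> car P. lth P x y}"

text \<open>The positions, in the total order, of the strict h-relations; all other pairs of positions
  i < j are r-related.\<close>

definition hcode :: "ppos \<Rightarrow> (nat \<times> nat) set" where
  "hcode P = map_prod (rank P) (rank P) ` hpairs P"

definition triangle :: "nat \<Rightarrow> (nat \<times> nat) set" where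
  "triangle n = {(i,j). i < j \<and> j < n}"

lemma lth_in_car: "plane_poset P \<Longrightarrow> lth P x y \<Longrightarrow> x \<in> car P \<and> y \<in> car P"
  unfolding lth_def using relh_in_car by blast

lemma hpairs_eq: "plane_poset P \<Longrightarrow> hpairs P = {(x,y). lth P x y}"
  unfolding hpairs_def using lth_in_car by blast

context
  fixes P :: ppos
  assumes P: "plane_poset P"
begin

lemma ball_rank_pairs_iff:
  "(\<forall>x\<in>car P. \<forall>y\<in>car P. R (rank P x) (rank P y)) \<longleftrightarrow> (\<forall>i<card (car P). \<forall>j<card (car P). R i j)"
  using rank_surj[OF P] rank_less_card[OF P] by metis

lemma card_rank_preimage:
  assumes C: "C \<subseteq> {..<card (car P)} \<times> {..<card (car P)}"
  shows "card {(x,y) \<in> car P \<times> car P. (rank P x, rank P y) \<in> C} = card C"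
proof -
  let ?S = "{(x,y) \<in> car P \<times> car P. (rank P x, rank P y) \<in> C}"
  have "inj_on (map_prod (rank P) (rank P)) ?S"
    using inj_on_rank[OF P] by (auto simp: inj_on_def)
  moreover have "map_prod (rank P) (rank P) ` ?S = C"
  proof (intro equalityI subsetI)
    fix p assume "p \<in> C"
    then obtain i j where ij: "p = (i,j)" "i < card (car P)" "j < card (car P)" using C by blast
    then obtain x y where "x \<in> car P" "y \<in> car P" "rank P x = i" "rank P y = j"
      using rank_surj[OF P] by metis
    then show "p \<in> map_prod (rank P) (rank P) ` ?S"
      using ij \<open>p \<in> C\<close> by (intro image_eqI[of _ _ "(x,y)"]) auto
  qed auto
  ultimately show ?thesis using card_image by fastforce
qed

lemma rank_pair_in_hcode_iff:
  "x \<in> car P \<Longrightarrow> y \<in> car P \<Longrightarrow> (rank P x, rank P y) \<in> hcode P \<longleftrightarrow> lth P x y"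
  unfolding hcode_def hpairs_def using inj_on_rank[OF P] by (auto dest: inj_onD)

lemma hcode_elem:
  assumes "(i,j) \<in> hcode P"
  obtains x y where "x \<in> car P" "y \<in> car P" "i = rank P x" "j = rank P y" "lth P x y"
  using assms unfolding hcode_def hpairs_def by auto

lemma hcode_subset_triangle: "hcode P \<subseteq> triangle (card (car P))"
proof
  fix p assume "p \<in> hcode P"
  then obtain x y where "x \<in> car P" "y \<in> car P" "p = (rank P x, rank P y)" "lth P x y"
    by (metis surj_pair hcode_elem)
  moreover have "tlt P x y" using \<open>lth P x y\<close> unfolding lth_def tlt_def tle_def by blast
  ultimately show "p \<in> triangle (card (car P))"
    unfolding triangle_def using rank_strict_mono[OF P] rank_less_card[OF P] by blast
qed

lemma finite_hcode: "finite (hcode P)"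
proof -
  have "hpairs P \<subseteq> car P \<times> car P" unfolding hpairs_def by auto
  then show ?thesis
    unfolding hcode_def using plane_poset_finite[OF P] by (meson finite_SigmaI finite_imageI finite_subset)
qed

lemma card_hcode: "card (hcode P) = card (hpairs P)"
  unfolding hcode_def using inj_on_rank[OF P]
  by (intro card_image) (auto simp: hpairs_def inj_on_def)

lemma relh_iff_hcode:
  "x \<in> car P \<Longrightarrow> y \<in> car P \<Longrightarrow> (x,y) \<in> relh P \<longleftrightarrow> x = y \<or> (rank P x, rank P y) \<in> hcode P"
  using rank_pair_in_hcode_iff relh_refl[OF P] unfolding lth_def by blast

lemma relr_iff_hcode:
  assumes x: "x \<in> car P" and y: "y \<in> car P"
  shows "(x,y) \<in> relr P \<longleftrightarrow> x = y \<or> (rank P x, rank P y) \<in> triangle (card (car P)) - hcode P"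
proof (cases "x = y")
  case True then show ?thesis using relr_refl[OF P x] by simp
next
  case ne: False
  have "(x,y) \<in> relr P \<longleftrightarrow> tlt P x y \<and> \<not> lth P x y"
    using relh_not_relr[OF P ne] ne unfolding tlt_def tle_def lth_def by blast
  then show ?thesis
    using rank_less_iff[OF P x y] rank_pair_in_hcode_iff[OF x y] rank_less_card[OF P y] ne
    unfolding triangle_def by auto
qed

lemma ltr_iff_hcode:
  "x \<in> car P \<Longrightarrow> y \<in> car P \<Longrightarrow> ltr P x y \<longleftrightarrow> (rank P x, rank P y) \<in> triangle (card (car P)) - hcode P"
  using relr_iff_hcode rank_eq_iff[OF P] unfolding ltr_def triangle_def by auto

end

lemma rank_preserving_rel_iff:
  assumes P: "plane_poset P" and Q: "plane_poset Q" and c: "card (car P) = card (car Q)"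
    and f: "\<And>x. x \<in> car P \<Longrightarrow> f x \<in> car Q \<and> rank Q (f x) = rank P x"
    and x: "x \<in> car P" and y: "y \<in> car P"
  shows "(f x, f y) \<in> relh Q \<longleftrightarrow> x = y \<or> (rank P x, rank P y) \<in> hcode Q"
    and "(f x, f y) \<in> relr Q \<longleftrightarrow> x = y \<or> (rank P x, rank P y) \<in> triangle (card (car P)) - hcode Q"
proof -
  have "f x = f y \<longleftrightarrow> x = y" using f x y rank_eq_iff[OF P x y] by metis
  then show "(f x, f y) \<in> relh Q \<longleftrightarrow> x = y \<or> (rank P x, rank P y) \<in> hcode Q"
    and "(f x, f y) \<in> relr Q \<longleftrightarrow> x = y \<or> (rank P x, rank P y) \<in> triangle (card (car P)) - hcode Q"
    using relh_iff_hcode[OF Q] relr_iff_hcode[OF Q] f x y c by simp_all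
qed

lemma
  assumes P: "plane_poset P" and Q: "plane_poset Q" and c: "card (car P) = card (car Q)"
    and "x \<in> car P" and "y \<in> car P"
  shows relh_theta_iff: "(theta P Q x, theta P Q y) \<in> relh Q \<longleftrightarrow> x = y \<or> (rank P x, rank P y) \<in> hcode Q"
    and relr_theta_iff: "(theta P Q x, theta P Q y) \<in> relr Q \<longleftrightarrow>
      x = y \<or> (rank P x, rank P y) \<in> triangle (card (car P)) - hcode Q"
  using rank_preserving_rel_iff[OF P Q c _ assms(4,5), of "theta P Q"]
    bij_betw_theta[OF P Q c] rank_theta[OF P Q c] by (auto dest: bij_betwE)

lemma
  assumes P: "plane_poset P" and Q: "plane_poset Q" and c: "card (car P) = card (car Q)"
    and xy: "x \<in> car P" "y \<in> car P"
  shows lth_theta_iff: "lth Q (theta P Q x) (theta P Q y) \<longleftrightarrow> (rank P x, rank P y) \<in> hcode Q"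
    and ltr_theta_iff: "ltr Q (theta P Q x) (theta P Q y) \<longleftrightarrow>
      (rank P x, rank P y) \<in> triangle (card (car P)) - hcode Q"
proof -
  have "theta P Q x = theta P Q y \<longleftrightarrow> x = y"
    using inj_on_eq_iff[OF bij_betw_imp_inj_on[OF bij_betw_theta[OF P Q c]] xy] .
  then show "lth Q (theta P Q x) (theta P Q y) \<longleftrightarrow> (rank P x, rank P y) \<in> hcode Q"
    and "ltr Q (theta P Q x) (theta P Q y) \<longleftrightarrow> (rank P x, rank P y) \<in> triangle (card (car P)) - hcode Q"
    using relh_theta_iff[OF P Q c xy] relr_theta_iff[OF P Q c xy] rank_eq_iff[OF P xy] hcode_subset_triangle[OF Q] c
    unfolding lth_def ltr_def triangle_def by auto
qed

lemma phi_hcode: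
  assumes P: "plane_poset P" and Q: "plane_poset Q" and c: "card (car P) = card (car Q)"
  shows "phi P Q = card (hcode Q - hcode P) + card (hcode P - hcode Q)"
proof -
  let ?n = "card (car P)" and ?rk = "\<lambda>x y. (rank P x, rank P y)"
  have sub: "hcode P \<subseteq> triangle ?n" "hcode Q \<subseteq> triangle ?n"
    using hcode_subset_triangle[OF P] hcode_subset_triangle[OF Q] c by auto
  have "{(x,y) \<in> car P \<times> car P. ltr P x y \<and> lth Q (theta P Q x) (theta P Q y)}
      = {(x,y) \<in> car P \<times> car P. ?rk x y \<in> hcode Q - hcode P}"
    using sub by (auto simp: ltr_iff_hcode[OF P] lth_theta_iff[OF P Q c] ltr_theta_iff[OF P Q c])
  moreover have "{(x,y) \<in> car P \<times> car P. lth P x y \<and> ltr Q (theta P Q x) (theta P Q y)}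
      = {(x,y) \<in> car P \<times> car P. ?rk x y \<in> hcode P - hcode Q}"
    using sub by (auto simp: rank_pair_in_hcode_iff[OF P] lth_theta_iff[OF P Q c] ltr_theta_iff[OF P Q c])
  moreover have "hcode Q - hcode P \<subseteq> {..<?n} \<times> {..<?n}" "hcode P - hcode Q \<subseteq> {..<?n} \<times> {..<?n}"
    using sub unfolding triangle_def by auto
  ultimately show ?thesis
    unfolding phi_def using card_rank_preimage[OF P] by presburger
qed

lemma pp_le_iota_iff:
  assumes P: "plane_poset P" and Q: "plane_poset Q"
  shows "pp_le (iota P) Q \<longleftrightarrow> card (car P) = card (car Q) \<and> hcode P \<inter> hcode Q = {}"
proof (cases "card (car P) = card (car Q)")
  case c: True
  let ?n = "card (car P)"
  have theta_iota: "theta (iota P) Q = theta P Q"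
    unfolding theta_def tle_def iota_def car_def relh_def relr_def by (simp add: disj_commute)
  have "pp_le (iota P) Q \<longleftrightarrow>
      (\<forall>x\<in>car P. \<forall>y\<in>car P. (theta P Q x, theta P Q y) \<in> relh Q \<longrightarrow> (x,y) \<in> relr P)"
    unfolding pp_le_def theta_iota using c by (simp add: iota_def car_def relh_def relr_def)
  also have "\<dots> \<longleftrightarrow> (\<forall>x\<in>car P. \<forall>y\<in>car P. rank P x \<noteq> rank P y \<longrightarrow>
      (rank P x, rank P y) \<in> hcode Q \<longrightarrow> (rank P x, rank P y) \<in> triangle ?n - hcode P)"
  proof (intro ball_cong refl)
    fix x y assume xy: "x \<in> car P" "y \<in> car P"
    then show "((theta P Q x, theta P Q y) \<in> relh Q \<longrightarrow> (x,y) \<in> relr P) \<longleftrightarrow>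
        (rank P x \<noteq> rank P y \<longrightarrow> (rank P x, rank P y) \<in> hcode Q \<longrightarrow>
          (rank P x, rank P y) \<in> triangle ?n - hcode P)"
      using relh_theta_iff[OF P Q c xy] relr_iff_hcode[OF P xy] rank_eq_iff[OF P xy] by auto
  qed
  also have "\<dots> \<longleftrightarrow> (\<forall>i<?n. \<forall>j<?n. i \<noteq> j \<longrightarrow> (i,j) \<in> hcode Q \<longrightarrow> (i,j) \<in> triangle ?n - hcode P)"
    by (rule ball_rank_pairs_iff[OF P])
  also have "\<dots> \<longleftrightarrow> hcode P \<inter> hcode Q = {}"
  proof
    assume "\<forall>i<?n. \<forall>j<?n. i \<noteq> j \<longrightarrow> (i,j) \<in> hcode Q \<longrightarrow> (i,j) \<in> triangle ?n - hcode P"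
    moreover have "i < j \<and> j < ?n" if "(i,j) \<in> hcode Q" for i j
      using hcode_subset_triangle[OF Q] c that unfolding triangle_def by auto
    ultimately show "hcode P \<inter> hcode Q = {}" by fastforce
  next
    assume "hcode P \<inter> hcode Q = {}"
    then show "\<forall>i<?n. \<forall>j<?n. i \<noteq> j \<longrightarrow> (i,j) \<in> hcode Q \<longrightarrow> (i,j) \<in> triangle ?n - hcode P"
      using hcode_subset_triangle[OF Q] c by auto
  qed
  finally show ?thesis using c by simp
qed (simp add: pp_le_def iota_def car_def)

lemma pp_pair_hcode:
  assumes P: "plane_poset P" and Q: "plane_poset Q"
  shows "pp_pair q P Q = (if card (car P) = card (car Q) \<and> hcode P \<inter> hcode Q = {}
           then q ^ (card (hcode P) + card (hcode Q)) else 0)"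
  using pp_le_iota_iff[OF P Q] phi_hcode[OF P Q]
  by (auto simp: pp_pair_def Diff_triv Int_commute add.commute)

lemma pp_pair_commute: "plane_poset P \<Longrightarrow> plane_poset Q \<Longrightarrow> pp_pair q P Q = pp_pair q Q P"
  by (auto simp: pp_pair_hcode Int_commute add.commute)

lemma pp_iso_iff_hcode:
  assumes P: "plane_poset P" and Q: "plane_poset Q"
  shows "pp_iso P Q \<longleftrightarrow> card (car P) = card (car Q) \<and> hcode P = hcode Q"
proof
  assume "pp_iso P Q"
  then obtain f where f: "bij_betw f (car P) (car Q)" and
    rel: "\<And>x y. x \<in> car P \<Longrightarrow> y \<in> car P \<Longrightarrow> ((x,y) \<in> relh P \<longleftrightarrow> (f x, f y) \<in> relh Q) \<and>
                             ((x,y) \<in> relr P \<longleftrightarrow> (f x, f y) \<in> relr Q)"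
    unfolding pp_iso_def by blast
  have c: "card (car P) = card (car Q)" using f by (rule bij_betw_same_card)
  have "tle Q (f x) (f y)" if "x \<in> car P" "y \<in> car P" "tle P x y" for x y
    using rel that unfolding tle_def by blast
  then have rk: "f x \<in> car Q \<and> rank Q (f x) = rank P x" if "x \<in> car P" for x
    using rank_monotone_bij[OF P Q f _ that] f that by (blast dest: bij_betwE)
  have "\<forall>x\<in>car P. \<forall>y\<in>car P. (rank P x, rank P y) \<in> hcode P \<longleftrightarrow> (rank P x, rank P y) \<in> hcode Q"
  proof (intro ballI)
    fix x y assume xy: "x \<in> car P" "y \<in> car P"
    show "(rank P x, rank P y) \<in> hcode P \<longleftrightarrow> (rank P x, rank P y) \<in> hcode Q"
      using relh_iff_hcode[OF P xy] rank_preserving_rel_iff(1)[where f=f, OF P Q c rk xy] rel[OF xy]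
        rank_eq_iff[OF P xy] hcode_subset_triangle[OF P] hcode_subset_triangle[OF Q]
      unfolding triangle_def by blast
  qed
  then have "\<forall>i<card (car P). \<forall>j<card (car P). (i,j) \<in> hcode P \<longleftrightarrow> (i,j) \<in> hcode Q"
    by (rule ball_rank_pairs_iff[OF P, THEN iffD1])
  then have "hcode P = hcode Q"
    using hcode_subset_triangle[OF P] hcode_subset_triangle[OF Q] c
    unfolding triangle_def by (auto 4 3)
  with c show "card (car P) = card (car Q) \<and> hcode P = hcode Q" ..
next
  assume "card (car P) = card (car Q) \<and> hcode P = hcode Q"
  then show "pp_iso P Q"
    using bij_betw_theta[OF P Q] relh_theta_iff[OF P Q] relr_theta_iff[OF P Q] relh_iff_hcode[OF P] relr_iff_hcode[OF P]
    unfolding pp_iso_def by (intro exI[of _ "theta P Q"]) auto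
qed

section \<open>Isomorphism classes\<close>

lemma pp_class_hcode:
  assumes "plane_poset P"
  shows "pp_class P = {Q. plane_poset Q \<and> card (car Q) = card (car P) \<and> hcode Q = hcode P}"
  unfolding pp_class_def
proof (rule Collect_cong)
  fix Q show "(plane_poset Q \<and> pp_iso P Q) \<longleftrightarrow>
      (plane_poset Q \<and> card (car Q) = card (car P) \<and> hcode Q = hcode P)"
    using pp_iso_iff_hcode[OF assms, of Q] by auto
qed

lemma pp_in_class: "plane_poset P \<Longrightarrow> P \<in> pp_class P"
  by (simp add: pp_class_hcode)

lemma rep_in_class: "rep c \<in> ppc_set c"
proof -
  obtain P where "plane_poset P" "ppc_set c = pp_class P" using ppc_set[of c] by blast
  then show ?thesis unfolding rep_def by (metis pp_in_class someI)
qed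

lemma plane_poset_rep: "plane_poset (rep c)"
  using ppc_set[of c] rep_in_class[of c] by (auto simp: pp_class_def)

lemma ppc_set_rep: "ppc_set c = pp_class (rep c)"
proof -
  obtain P where P: "plane_poset P" "ppc_set c = pp_class P" using ppc_set[of c] by blast
  then have "card (car (rep c)) = card (car P)" "hcode (rep c) = hcode P"
    using rep_in_class[of c] pp_class_hcode[OF P(1)] by auto
  then show ?thesis using P pp_class_hcode[OF plane_poset_rep] pp_class_hcode[OF P(1)] by simp
qed

lemma rep_class_of:
  assumes P: "plane_poset P"
  shows "card (car (rep (class_of P))) = card (car P) \<and> hcode (rep (class_of P)) = hcode P"
proof -
  have "ppc_set (class_of P) = pp_class P"
    unfolding class_of_def using P by (intro Abs_ppc_inverse) blast
  then show ?thesis using rep_in_class pp_class_hcode[OF P] by auto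
qed

lemma ppc_eqI:
  assumes "card (car (rep c)) = card (car (rep d))" and "hcode (rep c) = hcode (rep d)"
  shows "c = d"
proof -
  have "ppc_set c = ppc_set d"
    using assms by (simp add: ppc_set_rep pp_class_hcode[OF plane_poset_rep])
  then show ?thesis by (simp add: ppc_set_inject)
qed

lemma pp_pair_class_of_left:
  "plane_poset P \<Longrightarrow> plane_poset Q \<Longrightarrow> pp_pair q (rep (class_of P)) Q = pp_pair q P Q"
  by (simp add: pp_pair_hcode plane_poset_rep rep_class_of)

lemma pp_pair_class_of_right:
  "plane_poset P \<Longrightarrow> plane_poset Q \<Longrightarrow> pp_pair q P (rep (class_of Q)) = pp_pair q P Q"
  by (simp add: pp_pair_hcode plane_poset_rep rep_class_of)

section \<open>The product\<close>

lemma double_image_iff: "(u::nat) \<in> (\<lambda>x. 2*x) ` A \<longleftrightarrow> even u \<and> u div 2 \<in> A"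
proof
  assume "even u \<and> u div 2 \<in> A"
  then show "u \<in> (\<lambda>x. 2*x) ` A" by (intro image_eqI[where x="u div 2"]) auto
qed auto

lemma odd_image_iff: "(u::nat) \<in> (\<lambda>x. 2*x+1) ` A \<longleftrightarrow> odd u \<and> u div 2 \<in> A"
proof
  assume "odd u \<and> u div 2 \<in> A"
  then show "u \<in> (\<lambda>x. 2*x+1) ` A" by (intro image_eqI[where x="u div 2"]) auto
qed auto

lemma double_pair_image_iff:
  "((u::nat),(v::nat)) \<in> (\<lambda>(x,y). (2*x, 2*y)) ` R \<longleftrightarrow> even u \<and> even v \<and> (u div 2, v div 2) \<in> R"
proof
  assume "even u \<and> even v \<and> (u div 2, v div 2) \<in> R"
  then show "(u,v) \<in> (\<lambda>(x,y). (2*x, 2*y)) ` R" by (intro image_eqI[where x="(u div 2, v div 2)"]) auto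
qed auto

lemma odd_pair_image_iff:
  "((u::nat),(v::nat)) \<in> (\<lambda>(x,y). (2*x+1, 2*y+1)) ` R \<longleftrightarrow> odd u \<and> odd v \<and> (u div 2, v div 2) \<in> R"
proof
  assume "odd u \<and> odd v \<and> (u div 2, v div 2) \<in> R"
  then show "(u,v) \<in> (\<lambda>(x,y). (2*x+1, 2*y+1)) ` R"
    by (intro image_eqI[where x="(u div 2, v div 2)"]) auto
qed auto

lemma car_pp_prod:
  "u \<in> car (pp_prod P Q) \<longleftrightarrow> (even u \<and> u div 2 \<in> car P) \<or> (odd u \<and> u div 2 \<in> car Q)"
  unfolding pp_prod_def car_def using double_image_iff odd_image_iff by auto

lemma relh_pp_prod: "(u,v) \<in> relh (pp_prod P Q) \<longleftrightarrow>
   (even u \<and> even v \<and> (u div 2, v div 2) \<in> relh P) \<or> (odd u \<and> odd v \<and> (u div 2, v div 2) \<in> relh Q)"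
  unfolding pp_prod_def relh_def using double_pair_image_iff odd_pair_image_iff by auto

lemma relr_pp_prod: "(u,v) \<in> relr (pp_prod P Q) \<longleftrightarrow>
   (even u \<and> even v \<and> (u div 2, v div 2) \<in> relr P) \<or> (odd u \<and> odd v \<and> (u div 2, v div 2) \<in> relr Q)
   \<or> (even u \<and> odd v \<and> u div 2 \<in> car P \<and> v div 2 \<in> car Q)"
proof -
  have "(u,v) \<in> {(2*x, 2*y+1) | x y. x \<in> car P \<and> y \<in> car Q} \<longleftrightarrow>
      even u \<and> odd v \<and> u div 2 \<in> car P \<and> v div 2 \<in> car Q"
  proof
    assume "even u \<and> odd v \<and> u div 2 \<in> car P \<and> v div 2 \<in> car Q"
    then show "(u,v) \<in> {(2*x, 2*y+1) | x y. x \<in> car P \<and> y \<in> car Q}"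
      by (intro CollectI exI[where x="u div 2"] exI[where x="v div 2"]) auto
  qed auto
  then show ?thesis
    unfolding pp_prod_def relr_def car_def using double_pair_image_iff odd_pair_image_iff by auto
qed

lemma nat_eq_by_parity_div2: "even u = even v \<Longrightarrow> u div 2 = v div 2 \<Longrightarrow> u = (v::nat)"
  by (metis div_mult_mod_eq mod2_eq_if)

lemma partial_order_on_pp_prod:
  assumes P: "plane_poset P" and Q: "plane_poset Q"
  shows "partial_order_on (car (pp_prod P Q)) (relh (pp_prod P Q))"
    and "partial_order_on (car (pp_prod P Q)) (relr (pp_prod P Q))"
proof -
  let ?R = "pp_prod P Q"
  have "relh ?R \<subseteq> car ?R \<times> car ?R" "relr ?R \<subseteq> car ?R \<times> car ?R"
    using relh_in_car[OF P] relh_in_car[OF Q] relr_in_car[OF P] relr_in_car[OF Q]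
    by (auto simp: relh_pp_prod relr_pp_prod car_pp_prod)
  moreover have "refl_on (car ?R) (relh ?R)" "refl_on (car ?R) (relr ?R)"
    using relh_refl[OF P] relh_refl[OF Q] relr_refl[OF P] relr_refl[OF Q]
    by (auto simp: refl_on_def relh_pp_prod relr_pp_prod car_pp_prod)
  moreover have "trans (relh ?R)"
  proof (rule transI)
    fix x y z assume "(x,y) \<in> relh ?R" "(y,z) \<in> relh ?R"
    then show "(x,z) \<in> relh ?R"
      using relh_trans[OF P] relh_trans[OF Q] unfolding relh_pp_prod by blast
  qed
  moreover have "trans (relr ?R)"
  proof (rule transI)
    fix x y z assume "(x,y) \<in> relr ?R" "(y,z) \<in> relr ?R"
    then show "(x,z) \<in> relr ?R"
      using relr_trans[OF P] relr_trans[OF Q] relr_in_car[OF P] relr_in_car[OF Q]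
      unfolding relr_pp_prod by blast
  qed
  moreover have "antisym (relh ?R)"
  proof (rule antisymI)
    fix x y assume "(x,y) \<in> relh ?R" "(y,x) \<in> relh ?R"
    then have "even x = even y" "x div 2 = y div 2"
      using relh_antisym[OF P] relh_antisym[OF Q] unfolding relh_pp_prod by auto
    then show "x = y" by (rule nat_eq_by_parity_div2)
  qed
  moreover have "antisym (relr ?R)"
  proof (rule antisymI)
    fix x y assume "(x,y) \<in> relr ?R" "(y,x) \<in> relr ?R"
    then have "even x = even y" "x div 2 = y div 2"
      using relr_antisym[OF P] relr_antisym[OF Q] unfolding relr_pp_prod by auto
    then show "x = y" by (rule nat_eq_by_parity_div2)
  qed
  ultimately show "partial_order_on (car ?R) (relh ?R)" "partial_order_on (car ?R) (relr ?R)"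
    unfolding partial_order_on_def preorder_on_def by blast+
qed

lemma pp_prod_comparable_iff:
  assumes P: "plane_poset P" and Q: "plane_poset Q"
    and x: "x \<in> car (pp_prod P Q)" and y: "y \<in> car (pp_prod P Q)" and ne: "x \<noteq> y"
  shows "((x,y) \<in> relh (pp_prod P Q) \<or> (y,x) \<in> relh (pp_prod P Q)) \<longleftrightarrow>
    \<not> ((x,y) \<in> relr (pp_prod P Q) \<or> (y,x) \<in> relr (pp_prod P Q))"
proof (cases "even x = even y")
  case True
  then have "x div 2 \<noteq> y div 2" using ne nat_eq_by_parity_div2 by blast
  then show ?thesis
    using relh_relr_comparable_iff[OF P, of "x div 2" "y div 2"]
      relh_relr_comparable_iff[OF Q, of "x div 2" "y div 2"] True x y
    unfolding relh_pp_prod relr_pp_prod car_pp_prod by auto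
next
  case False
  then show ?thesis using x y unfolding relh_pp_prod relr_pp_prod car_pp_prod by auto
qed

lemma plane_poset_pp_prod:
  assumes P: "plane_poset P" and Q: "plane_poset Q"
  shows "plane_poset (pp_prod P Q)"
proof -
  have "finite (car (pp_prod P Q))"
    using plane_poset_finite[OF P] plane_poset_finite[OF Q] by (simp add: pp_prod_def car_def)
  then show ?thesis
    unfolding plane_poset_def
    using partial_order_on_pp_prod[OF P Q] pp_prod_comparable_iff[OF P Q] by blast
qed

lemma tle_pp_prod: "tle (pp_prod P Q) u v \<longleftrightarrow>
   (even u \<and> even v \<and> tle P (u div 2) (v div 2)) \<or> (odd u \<and> odd v \<and> tle Q (u div 2) (v div 2))
   \<or> (even u \<and> odd v \<and> u div 2 \<in> car P \<and> v div 2 \<in> car Q)"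
  unfolding tle_def relh_pp_prod relr_pp_prod by auto

lemma card_pp_prod:
  assumes P: "plane_poset P" and Q: "plane_poset Q"
  shows "card (car (pp_prod P Q)) = card (car P) + card (car Q)"
proof -
  have "(\<lambda>x. 2*x) ` car P \<inter> (\<lambda>x. 2*x+1) ` car Q = {}" by auto presburger
  moreover have "card ((\<lambda>x::nat. 2*x) ` car P) = card (car P)"
    "card ((\<lambda>x::nat. 2*x+1) ` car Q) = card (car Q)"
    by (auto intro!: card_image simp: inj_on_def)
  ultimately show ?thesis
    using plane_poset_finite[OF P] plane_poset_finite[OF Q]
    by (simp add: pp_prod_def car_def card_Un_disjoint)
qed

lemma rank_pp_prod_left:
  assumes "x \<in> car P"
  shows "rank (pp_prod P Q) (2*x) = rank P x"
proof -
  have "{w \<in> car (pp_prod P Q). tlt (pp_prod P Q) w (2*x)} = (\<lambda>y. 2*y) ` {y \<in> car P. tlt P y x}"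
  proof (intro equalityI subsetI)
    fix w assume "w \<in> {w \<in> car (pp_prod P Q). tlt (pp_prod P Q) w (2*x)}"
    then have "even w" "w div 2 \<in> {y \<in> car P. tlt P y x}"
      unfolding tlt_def tle_pp_prod car_pp_prod by auto
    then show "w \<in> (\<lambda>y. 2*y) ` {y \<in> car P. tlt P y x}" by (intro image_eqI[where x="w div 2"]) auto
  qed (auto simp: tlt_def tle_pp_prod car_pp_prod)
  moreover have "card ((\<lambda>y::nat. 2*y) ` {y \<in> car P. tlt P y x}) = card {y \<in> car P. tlt P y x}"
    by (rule card_image) (auto simp: inj_on_def)
  ultimately show ?thesis unfolding rank_def by simp
qed

lemma rank_pp_prod_right:
  assumes P: "plane_poset P" and Q: "plane_poset Q" and y: "y \<in> car Q"
  shows "rank (pp_prod P Q) (2*y+1) = card (car P) + rank Q y"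
proof -
  have "{w \<in> car (pp_prod P Q). tlt (pp_prod P Q) w (2*y+1)} =
        (\<lambda>x. 2*x) ` car P \<union> (\<lambda>z. 2*z+1) ` {z \<in> car Q. tlt Q z y}"
  proof
    show "{w \<in> car (pp_prod P Q). tlt (pp_prod P Q) w (2*y+1)} \<subseteq>
        (\<lambda>x. 2*x) ` car P \<union> (\<lambda>z. 2*z+1) ` {z \<in> car Q. tlt Q z y}"
    proof
    fix w assume w: "w \<in> {w \<in> car (pp_prod P Q). tlt (pp_prod P Q) w (2*y+1)}"
    show "w \<in> (\<lambda>x. 2*x) ` car P \<union> (\<lambda>z. 2*z+1) ` {z \<in> car Q. tlt Q z y}"
    proof (cases "even w")
      case True
      then have "w div 2 \<in> car P" using w unfolding car_pp_prod by auto
      then show ?thesis using True by (intro UnI1 image_eqI[where x="w div 2"]) auto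
    next
      case False
      then have "w div 2 \<in> {z \<in> car Q. tlt Q z y}"
        using w unfolding tlt_def tle_pp_prod car_pp_prod by auto
      then show ?thesis using False by (intro UnI2 image_eqI[where x="w div 2"]) auto
    qed
    qed
  next
    show "(\<lambda>x. 2*x) ` car P \<union> (\<lambda>z. 2*z+1) ` {z \<in> car Q. tlt Q z y} \<subseteq>
        {w \<in> car (pp_prod P Q). tlt (pp_prod P Q) w (2*y+1)}"
      using y unfolding tlt_def tle_pp_prod car_pp_prod by auto presburger+
  qed
  moreover have "(\<lambda>x. 2*x) ` car P \<inter> (\<lambda>z. 2*z+1) ` {z \<in> car Q. tlt Q z y} = {}"
    by auto presburger
  moreover have "card ((\<lambda>x::nat. 2*x) ` car P) = card (car P)"
    "card ((\<lambda>x::nat. 2*x+1) ` {z \<in> car Q. tlt Q z y}) = card {z \<in> car Q. tlt Q z y}"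
    by (auto intro!: card_image simp: inj_on_def)
  ultimately show ?thesis unfolding rank_def using plane_poset_finite[OF P] plane_poset_finite[OF Q]
    by (simp add: card_Un_disjoint)
qed

definition shift_pair :: "nat \<Rightarrow> nat \<times> nat \<Rightarrow> nat \<times> nat" where
  "shift_pair k = (\<lambda>(i,j). (i + k, j + k))"

lemma hpairs_pp_prod:
  assumes P: "plane_poset P" and Q: "plane_poset Q"
  shows "hpairs (pp_prod P Q) =
    (\<lambda>(x,y). (2*x, 2*y)) ` hpairs P \<union> (\<lambda>(x,y). (2*x+1, 2*y+1)) ` hpairs Q"
proof (intro set_eqI)
  have lth_R: "lth (pp_prod P Q) u v \<longleftrightarrow> (even u \<and> even v \<and> lth P (u div 2) (v div 2)) \<or>
      (odd u \<and> odd v \<and> lth Q (u div 2) (v div 2))" for u v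
    unfolding lth_def relh_pp_prod using nat_eq_by_parity_div2 by blast
  fix p show "p \<in> hpairs (pp_prod P Q) \<longleftrightarrow>
      p \<in> (\<lambda>(x,y). (2*x, 2*y)) ` hpairs P \<union> (\<lambda>(x,y). (2*x+1, 2*y+1)) ` hpairs Q"
  proof (cases p)
    case (Pair u v)
    show ?thesis
      unfolding hpairs_eq[OF plane_poset_pp_prod[OF P Q]] hpairs_eq[OF P] hpairs_eq[OF Q] Pair Un_iff
        double_pair_image_iff odd_pair_image_iff
      by (simp add: lth_R)
  qed
qed

lemma hcode_pp_prod:
  assumes P: "plane_poset P" and Q: "plane_poset Q"
  shows "hcode (pp_prod P Q) = hcode P \<union> shift_pair (card (car P)) ` hcode Q"
proof -
  let ?rank_pair = "map_prod (rank (pp_prod P Q)) (rank (pp_prod P Q))"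
  have "?rank_pair ` (\<lambda>(x,y). (2*x, 2*y)) ` hpairs P = hcode P"
    unfolding hcode_def image_image
    by (intro image_cong refl) (auto simp: hpairs_def rank_pp_prod_left)
  moreover have "?rank_pair ` (\<lambda>(x,y). (2*x+1, 2*y+1)) ` hpairs Q = shift_pair (card (car P)) ` hcode Q"
    unfolding hcode_def image_image shift_pair_def
    by (intro image_cong refl) (auto simp: hpairs_def rank_pp_prod_right[OF P Q, simplified])
  ultimately show ?thesis unfolding hcode_def hpairs_pp_prod[OF P Q] image_Un by simp
qed

lemma card_hcode_pp_prod:
  assumes P: "plane_poset P" and Q: "plane_poset Q"
  shows "card (hcode (pp_prod P Q)) = card (hcode P) + card (hcode Q)"
proof -
  have "hcode P \<inter> shift_pair (card (car P)) ` hcode Q = {}"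
    using hcode_subset_triangle[OF P] by (auto simp: shift_pair_def triangle_def)
  moreover have "card (shift_pair (card (car P)) ` hcode Q) = card (hcode Q)"
    by (rule card_image) (auto simp: inj_on_def shift_pair_def)
  ultimately show ?thesis
    unfolding hcode_pp_prod[OF P Q] using finite_hcode[OF P] finite_hcode[OF Q]
    by (simp add: card_Un_disjoint)
qed

section \<open>Biideals and the coproduct\<close>

lemma restr_simps [simp]: "car (restr Z S) = S" "relh (restr Z S) = relh Z \<inter> S \<times> S"
  "relr (restr Z S) = relr Z \<inter> S \<times> S"
  by (simp_all add: restr_def car_def relh_def relr_def)

lemma plane_poset_restr:
  assumes Z: "plane_poset Z" and S: "S \<subseteq> car Z"
  shows "plane_poset (restr Z S)"
proof -
  have "finite S" using plane_poset_finite[OF Z] S finite_subset by blast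
  moreover have "partial_order_on S (relh Z \<inter> S \<times> S)" "partial_order_on S (relr Z \<inter> S \<times> S)"
    unfolding partial_order_on_def preorder_on_def refl_on_def trans_def antisym_def
    using S relh_refl[OF Z] relr_refl[OF Z] relh_trans[OF Z] relr_trans[OF Z]
      relh_antisym[OF Z] relr_antisym[OF Z]
    by (auto simp: subset_iff)
  moreover have "\<forall>x\<in>S. \<forall>y\<in>S. x \<noteq> y \<longrightarrow>
        (((x,y) \<in> relh Z \<inter> S \<times> S \<or> (y,x) \<in> relh Z \<inter> S \<times> S) \<longleftrightarrow>
         \<not> ((x,y) \<in> relr Z \<inter> S \<times> S \<or> (y,x) \<in> relr Z \<inter> S \<times> S))"
    using relh_relr_comparable_iff[OF Z] S by blast
  ultimately show ?thesis unfolding plane_poset_def restr_simps by blast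
qed

lemma tlt_restr: "tlt (restr Z S) x y \<longleftrightarrow> x \<in> S \<and> y \<in> S \<and> tlt Z x y"
  unfolding tlt_def tle_def by auto

lemma lth_restr: "lth (restr Z S) x y \<longleftrightarrow> x \<in> S \<and> y \<in> S \<and> lth Z x y"
  unfolding lth_def by auto

definition initial_seg :: "ppos \<Rightarrow> nat \<Rightarrow> nat set" where
  "initial_seg Z k = {x \<in> car Z. rank Z x < k}"

definition final_seg :: "ppos \<Rightarrow> nat \<Rightarrow> nat set" where
  "final_seg Z k = {x \<in> car Z. k \<le> rank Z x}"

lemma initial_seg_subset: "initial_seg Z k \<subseteq> car Z"
  and final_seg_subset: "final_seg Z k \<subseteq> car Z"
  and car_diff_final_seg: "car Z - final_seg Z k = initial_seg Z k"
  unfolding initial_seg_def final_seg_def by auto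

lemma rank_restr_initial_seg:
  assumes Z: "plane_poset Z" and x: "x \<in> initial_seg Z k"
  shows "rank (restr Z (initial_seg Z k)) x = rank Z x"
proof -
  have "{y \<in> initial_seg Z k. tlt (restr Z (initial_seg Z k)) y x} = {y \<in> car Z. tlt Z y x}"
  proof (intro equalityI subsetI)
    fix y assume y: "y \<in> {y \<in> car Z. tlt Z y x}"
    then have "rank Z y < rank Z x" using rank_strict_mono[OF Z] by blast
    then show "y \<in> {y \<in> initial_seg Z k. tlt (restr Z (initial_seg Z k)) y x}"
      using x y unfolding initial_seg_def tlt_restr by auto
  qed (auto simp: initial_seg_def tlt_restr)
  then show ?thesis unfolding rank_def by simp
qed

context
  fixes Z :: ppos and k :: nat
  assumes Z: "plane_poset Z" and k: "k \<le> card (car Z)"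
begin

lemma card_initial_seg: "card (initial_seg Z k) = k"
proof -
  have "rank Z ` initial_seg Z k = {..<k}"
  proof (intro equalityI subsetI)
    fix i assume "i \<in> {..<k}"
    then obtain x where "x \<in> car Z" "rank Z x = i" using rank_surj[OF Z, of i] k by auto
    then show "i \<in> rank Z ` initial_seg Z k" using \<open>i \<in> {..<k}\<close> unfolding initial_seg_def by auto
  qed (auto simp: initial_seg_def)
  moreover have "inj_on (rank Z) (initial_seg Z k)"
    using inj_on_rank[OF Z] initial_seg_subset by (rule inj_on_subset)
  ultimately show ?thesis using card_image by fastforce
qed

lemma card_final_seg: "card (final_seg Z k) = card (car Z) - k"
  using card_Diff_subset[OF _ final_seg_subset, of Z k] card_initial_seg car_diff_final_seg
    plane_poset_finite[OF Z] final_seg_subset card_mono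
  by (metis diff_diff_cancel finite_subset)

lemma rank_restr_final_seg:
  assumes x: "x \<in> final_seg Z k"
  shows "rank (restr Z (final_seg Z k)) x = rank Z x - k"
proof -
  have x': "x \<in> car Z" "k \<le> rank Z x" using x unfolding final_seg_def by auto
  have "{y \<in> car Z. tlt Z y x} = initial_seg Z k \<union> {y \<in> final_seg Z k. tlt Z y x}"
  proof (intro equalityI subsetI)
    fix y assume "y \<in> initial_seg Z k \<union> {y \<in> final_seg Z k. tlt Z y x}"
    then show "y \<in> {y \<in> car Z. tlt Z y x}"
      using rank_less_iff[OF Z _ x'(1)] x' unfolding initial_seg_def final_seg_def
      by (metis (mono_tags, lifting) Un_iff mem_Collect_eq order.strict_trans2)
  qed (auto simp: initial_seg_def final_seg_def)
  moreover have "initial_seg Z k \<inter> {y \<in> final_seg Z k. tlt Z y x} = {}"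
    unfolding initial_seg_def final_seg_def by auto
  moreover have "finite (initial_seg Z k)" "finite {y \<in> final_seg Z k. tlt Z y x}"
    using plane_poset_finite[OF Z] unfolding initial_seg_def final_seg_def by auto
  ultimately have "rank Z x = k + card {y \<in> final_seg Z k. tlt Z y x}"
    unfolding rank_def using card_initial_seg by (simp add: card_Un_disjoint)
  moreover have "{y \<in> final_seg Z k. tlt (restr Z (final_seg Z k)) y x} = {y \<in> final_seg Z k. tlt Z y x}"
    using x unfolding tlt_restr by auto
  ultimately show ?thesis unfolding rank_def by simp
qed

lemma hcode_restr_final_seg:
  "hcode (restr Z (final_seg Z k)) = (\<lambda>(i,j). (i - k, j - k)) ` {(i,j) \<in> hcode Z. k \<le> i}"
proof (intro equalityI subsetI)
  let ?R = "restr Z (final_seg Z k)"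
  have R: "plane_poset ?R" using plane_poset_restr[OF Z final_seg_subset] .
  fix p assume "p \<in> hcode ?R"
  then obtain i j where ij: "p = (i,j)" "(i,j) \<in> hcode ?R" by (cases p) auto
  then obtain x y where xy: "x \<in> final_seg Z k" "y \<in> final_seg Z k" "i = rank ?R x" "j = rank ?R y"
      "lth ?R x y"
    by (metis hcode_elem[OF R] restr_simps(1))
  then have "(rank Z x, rank Z y) \<in> {(i,j) \<in> hcode Z. k \<le> i}"
    using rank_pair_in_hcode_iff[OF Z] lth_restr final_seg_subset unfolding final_seg_def by auto
  moreover have "i = rank Z x - k" "j = rank Z y - k" using xy rank_restr_final_seg by auto
  ultimately show "p \<in> (\<lambda>(i,j). (i - k, j - k)) ` {(i,j) \<in> hcode Z. k \<le> i}"
    using ij by (intro image_eqI[where x="(rank Z x, rank Z y)"]) auto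
next
  let ?R = "restr Z (final_seg Z k)"
  have R: "plane_poset ?R" using plane_poset_restr[OF Z final_seg_subset] .
  fix p assume "p \<in> (\<lambda>(i,j). (i - k, j - k)) ` {(i,j) \<in> hcode Z. k \<le> i}"
  then obtain i j where ij: "p = (i - k, j - k)" "(i,j) \<in> hcode Z" "k \<le> i" by auto
  then obtain x y where xy: "x \<in> car Z" "y \<in> car Z" "i = rank Z x" "j = rank Z y" "lth Z x y"
    by (meson hcode_elem[OF Z])
  have "rank Z x < rank Z y" using rank_strict_mono[OF Z] xy unfolding lth_def tlt_def tle_def by blast
  then have F: "x \<in> final_seg Z k" "y \<in> final_seg Z k" using xy ij unfolding final_seg_def by auto
  then have "lth ?R x y" using xy lth_restr by blast
  then show "p \<in> hcode ?R"
    using rank_pair_in_hcode_iff[OF R, of x y] rank_restr_final_seg F xy ij by simp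
qed

end

lemma hcode_restr_initial_seg:
  assumes Z: "plane_poset Z"
  shows "hcode (restr Z (initial_seg Z k)) = {(i,j) \<in> hcode Z. j < k}"
proof (intro equalityI subsetI)
  let ?R = "restr Z (initial_seg Z k)"
  have R: "plane_poset ?R" using plane_poset_restr[OF Z initial_seg_subset] .
  note rk = rank_restr_initial_seg[OF Z]
  {
    fix p assume "p \<in> hcode ?R"
    then obtain i j where ij: "p = (i,j)" "(i,j) \<in> hcode ?R" by (cases p) auto
    then obtain x y where xy: "x \<in> initial_seg Z k" "y \<in> initial_seg Z k" "i = rank ?R x"
        "j = rank ?R y" "lth ?R x y"
      by (metis hcode_elem[OF R] restr_simps(1))
    then show "p \<in> {(i,j) \<in> hcode Z. j < k}"
      using rank_pair_in_hcode_iff[OF Z] lth_restr rk ij initial_seg_subset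
      unfolding initial_seg_def by auto
  }
  fix p assume "p \<in> {(i,j) \<in> hcode Z. j < k}"
  then obtain i j where ij: "p = (i,j)" "(i,j) \<in> hcode Z" "j < k" by auto
  then obtain x y where xy: "x \<in> car Z" "y \<in> car Z" "i = rank Z x" "j = rank Z y" "lth Z x y"
    by (meson hcode_elem[OF Z])
  have "rank Z x < rank Z y" using rank_strict_mono[OF Z] xy unfolding lth_def tlt_def tle_def by blast
  then have I: "x \<in> initial_seg Z k" "y \<in> initial_seg Z k" using xy ij unfolding initial_seg_def by auto
  then have "lth ?R x y" using xy lth_restr by blast
  then show "p \<in> hcode ?R" using rank_pair_in_hcode_iff[OF R, of x y] rk I xy ij by simp
qed

lemma biideal_final_seg:
  assumes Z: "plane_poset Z"
  shows "biideal Z (final_seg Z k)"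
  unfolding biideal_def
proof (intro conjI ballI impI)
  fix x y assume x: "x \<in> final_seg Z k" and y: "y \<in> car Z"
    and "(x,y) \<in> relh Z \<or> (x,y) \<in> relr Z"
  then have "rank Z x \<le> rank Z y"
    using rank_le_iff[OF Z] final_seg_subset unfolding tle_def by blast
  then show "y \<in> final_seg Z k" using x y unfolding final_seg_def by auto
qed (rule final_seg_subset)

text \<open>Biideals are upward closed for the total order, hence they are totally ordered by inclusion.\<close>

lemma biideal_eq_if_card_eq:
  assumes Z: "plane_poset Z" and I: "biideal Z I" and J: "biideal Z J" and c: "card I = card J"
  shows "I = J"
proof -
  have IJ: "I \<subseteq> car Z" "J \<subseteq> car Z" using I J unfolding biideal_def by auto
  have "I \<subseteq> J \<or> J \<subseteq> I"
  proof (rule ccontr)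
    assume "\<not> (I \<subseteq> J \<or> J \<subseteq> I)"
    then obtain x y where xy: "x \<in> I" "x \<notin> J" "y \<in> J" "y \<notin> I" by blast
    then have "tle Z x y \<or> tle Z y x" using tle_total[OF Z] IJ by blast
    then show False using I J xy IJ unfolding biideal_def tle_def by blast
  qed
  moreover have "finite I" "finite J" using IJ plane_poset_finite[OF Z] finite_subset by blast+
  ultimately show ?thesis using c by (metis card_subset_eq)
qed

lemma finite_biideals: "plane_poset Z \<Longrightarrow> finite {I. biideal Z I}"
  by (rule finite_subset[of _ "Pow (car Z)"]) (auto simp: biideal_def plane_poset_finite)

lemma hcount_add_card_hpairs:
  assumes Z: "plane_poset Z" and I: "biideal Z I"
  shows "hcount Z (car Z - I) I + card (hpairs (restr Z (car Z - I))) + card (hpairs (restr Z I))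
    = card (hpairs Z)"
proof -
  let ?A = "car Z - I"
  have Isub: "I \<subseteq> car Z" using I unfolding biideal_def by auto
  have hpairs_restr: "hpairs (restr Z S) = hpairs Z \<inter> S \<times> S" if "S \<subseteq> car Z" for S
    using that unfolding hpairs_def lth_restr by auto
  have "x \<in> I \<Longrightarrow> y \<in> I" if "(x,y) \<in> hpairs Z" for x y
    using I that unfolding biideal_def hpairs_def lth_def by blast
  then have split: "hpairs Z = (hpairs Z \<inter> ?A \<times> I) \<union> (hpairs Z \<inter> ?A \<times> ?A) \<union> (hpairs Z \<inter> I \<times> I)"
    unfolding hpairs_def by auto
  have "finite (hpairs Z)"
    using plane_poset_finite[OF Z] unfolding hpairs_def by (auto intro: finite_subset)
  then have "card (hpairs Z) =
      card (hpairs Z \<inter> ?A \<times> I) + card (hpairs Z \<inter> ?A \<times> ?A) + card (hpairs Z \<inter> I \<times> I)"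
    by (subst split, subst card_Un_disjoint, auto, subst card_Un_disjoint, auto)
  moreover have "hcount Z ?A I = card (hpairs Z \<inter> ?A \<times> I)"
    unfolding hcount_def hpairs_def using Isub by (intro arg_cong[where f=card]) auto
  ultimately show ?thesis using hpairs_restr[of ?A] hpairs_restr[OF Isub] by simp
qed

lemma hcode_pp_prod_disjoint_iff:
  assumes P: "plane_poset P" and Z: "plane_poset Z"
    and k: "k = card (car P)" and kn: "k \<le> card (car Z)"
  shows "(hcode P \<union> shift_pair k ` C) \<inter> hcode Z = {} \<longleftrightarrow>
     hcode P \<inter> hcode (restr Z (initial_seg Z k)) = {} \<and> C \<inter> hcode (restr Z (final_seg Z k)) = {}"
proof -
  have "hcode P \<subseteq> {(i,j). j < k}" using hcode_subset_triangle[OF P] k by (auto simp: triangle_def)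
  moreover have "shift_pair k ` C \<inter> hcode Z = {} \<longleftrightarrow> C \<inter> hcode (restr Z (final_seg Z k)) = {}"
  proof -
    have "shift_pair k (i,j) \<in> hcode Z \<longleftrightarrow> (i,j) \<in> hcode (restr Z (final_seg Z k))" for i j
    proof
      assume "shift_pair k (i,j) \<in> hcode Z"
      then show "(i,j) \<in> hcode (restr Z (final_seg Z k))"
        unfolding hcode_restr_final_seg[OF Z kn] shift_pair_def
        by (intro image_eqI[where x="(i+k, j+k)"]) auto
    next
      assume "(i,j) \<in> hcode (restr Z (final_seg Z k))"
      then obtain i' j' where "(i',j') \<in> hcode Z" "k \<le> i'" "i = i' - k" "j = j' - k"
        unfolding hcode_restr_final_seg[OF Z kn] by auto
      moreover have "i' < j'" using hcode_subset_triangle[OF Z] \<open>(i',j') \<in> hcode Z\<close>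
        by (auto simp: triangle_def)
      ultimately show "shift_pair k (i,j) \<in> hcode Z" unfolding shift_pair_def by simp
    qed
    then show ?thesis by auto
  qed
  ultimately show ?thesis unfolding hcode_restr_initial_seg[OF Z] by blast
qed

lemma pp_pair_pp_prod_final_seg:
  assumes P: "plane_poset P" and Q: "plane_poset Q" and Z: "plane_poset Z"
    and k: "k = card (car P)" and n: "card (car P) + card (car Q) = card (car Z)"
  shows "pp_pair q (pp_prod P Q) Z = q ^ hcount Z (initial_seg Z k) (final_seg Z k) *
      pp_pair q P (restr Z (initial_seg Z k)) * pp_pair q Q (restr Z (final_seg Z k))"
proof -
  let ?L = "initial_seg Z k" and ?H = "final_seg Z k"
  have kn: "k \<le> card (car Z)" using k n by simp
  have L: "plane_poset (restr Z ?L)" by (rule plane_poset_restr[OF Z initial_seg_subset])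
  have H: "plane_poset (restr Z ?H)" by (rule plane_poset_restr[OF Z final_seg_subset])
  have exponent: "hcount Z ?L ?H + card (hcode (restr Z ?L)) + card (hcode (restr Z ?H))
      = card (hcode Z)"
    using hcount_add_card_hpairs[OF Z biideal_final_seg[OF Z]] car_diff_final_seg
      card_hcode[OF L] card_hcode[OF H] card_hcode[OF Z] by simp
  have "pp_pair q (pp_prod P Q) Z = (if (hcode P \<union> shift_pair k ` hcode Q) \<inter> hcode Z = {}
      then q ^ (card (hcode P) + card (hcode Q) + card (hcode Z)) else 0)"
    unfolding pp_pair_hcode[OF plane_poset_pp_prod[OF P Q] Z] hcode_pp_prod[OF P Q] card_pp_prod[OF P Q]
    using card_hcode_pp_prod[OF P Q, unfolded hcode_pp_prod[OF P Q]] n k by simp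
  also have "\<dots> = (if hcode P \<inter> hcode (restr Z ?L) = {} \<and> hcode Q \<inter> hcode (restr Z ?H) = {}
      then q ^ (hcount Z ?L ?H + (card (hcode P) + card (hcode (restr Z ?L)))
        + (card (hcode Q) + card (hcode (restr Z ?H)))) else 0)"
    unfolding hcode_pp_prod_disjoint_iff[OF P Z k kn] using exponent by (simp add: algebra_simps)
  also have "\<dots> = q ^ hcount Z ?L ?H * pp_pair q P (restr Z ?L) * pp_pair q Q (restr Z ?H)"
  proof -
    have "pp_pair q P (restr Z ?L) = (if hcode P \<inter> hcode (restr Z ?L) = {}
        then q ^ (card (hcode P) + card (hcode (restr Z ?L))) else 0)"
      unfolding pp_pair_hcode[OF P L] using card_initial_seg[OF Z kn] k by simp
    moreover have "pp_pair q Q (restr Z ?H) = (if hcode Q \<inter> hcode (restr Z ?H) = {}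
        then q ^ (card (hcode Q) + card (hcode (restr Z ?H))) else 0)"
    proof -
      have "card (final_seg Z k) = card (car Q)" using card_final_seg[OF Z kn] k n by simp
      then show ?thesis unfolding pp_pair_hcode[OF Q H] by simp
    qed
    ultimately show ?thesis by (simp add: power_add)
  qed
  finally show ?thesis .
qed

text \<open>Only the biideal of the right size contributes, and it is a final segment.\<close>

lemma pp_pair_pp_prod:
  assumes P: "plane_poset P" and Q: "plane_poset Q" and Z: "plane_poset Z"
  shows "pp_pair q (pp_prod P Q) Z = (\<Sum>I\<in>{I. biideal Z I}.
      q ^ hcount Z (car Z - I) I * pp_pair q P (restr Z (car Z - I)) * pp_pair q Q (restr Z I))"
proof -
  define f where "f I = q ^ hcount Z (car Z - I) I * pp_pair q P (restr Z (car Z - I))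
      * pp_pair q Q (restr Z I)" for I
  have f_zero: "f I = 0" if I: "biideal Z I" and c: "card I \<noteq> card (car Q) \<or> card (car Z - I) \<noteq> card (car P)" for I
  proof -
    have "I \<subseteq> car Z" using I unfolding biideal_def by auto
    then have "plane_poset (restr Z (car Z - I))" "plane_poset (restr Z I)"
      using plane_poset_restr[OF Z] by auto
    then show ?thesis using c unfolding f_def by (auto simp: pp_pair_hcode[OF P] pp_pair_hcode[OF Q])
  qed
  have card_split: "card (car Z - I) + card I = card (car Z)" if "biideal Z I" for I
    using that plane_poset_finite[OF Z] unfolding biideal_def
    by (metis card_Diff_subset card_mono finite_subset le_add_diff_inverse2)
  show ?thesis
  proof (cases "card (car P) + card (car Q) = card (car Z)")
    case False
    then have "(\<Sum>I\<in>{I. biideal Z I}. f I) = 0"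
      using f_zero card_split by (intro sum.neutral) force
    moreover have "pp_pair q (pp_prod P Q) Z = 0"
      using pp_pair_hcode[OF plane_poset_pp_prod[OF P Q] Z] card_pp_prod[OF P Q] False by simp
    ultimately show ?thesis unfolding f_def by simp
  next
    case n: True
    define k where "k = card (car P)"
    have kn: "k \<le> card (car Z)" using n k_def by simp
    have H: "biideal Z (final_seg Z k)" by (rule biideal_final_seg[OF Z])
    have "card (final_seg Z k) = card (car Q)" using card_final_seg[OF Z kn] n k_def by simp
    then have "f I = 0" if "I \<in> {I. biideal Z I} - {final_seg Z k}" for I
      using that f_zero biideal_eq_if_card_eq[OF Z _ H] by auto
    then have "(\<Sum>I\<in>{I. biideal Z I}. f I) = f (final_seg Z k)"
      using sum.remove[OF finite_biideals[OF Z], of "final_seg Z k" f] H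
      by (simp add: sum.neutral)
    then show ?thesis
      using pp_pair_pp_prod_final_seg[OF P Q Z k_def n] car_diff_final_seg unfolding f_def by simp
  qed
qed

section \<open>The bilinear form\<close>

definition linear_ext :: "('a \<Rightarrow> 'k::comm_semiring_1) \<Rightarrow> ('a \<Rightarrow>\<^sub>0 'k) \<Rightarrow> 'k" where
  "linear_ext g x = (\<Sum>a\<in>Poly_Mapping.keys x. Poly_Mapping.lookup x a * g a)"

lemma linear_ext_superset:
  assumes "finite S" "Poly_Mapping.keys x \<subseteq> S"
  shows "linear_ext g x = (\<Sum>a\<in>S. Poly_Mapping.lookup x a * g a)"
  unfolding linear_ext_def
  by (rule sum.mono_neutral_left) (use assms in \<open>auto simp: in_keys_iff\<close>)

lemma linear_ext_add: "linear_ext g (x + y) = linear_ext g x + linear_ext g y"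
proof -
  let ?S = "Poly_Mapping.keys x \<union> Poly_Mapping.keys y"
  have f: "finite ?S" by simp
  have "linear_ext g (x + y) = (\<Sum>a\<in>?S. Poly_Mapping.lookup (x + y) a * g a)"
    using keys_add[of x y] by (intro linear_ext_superset f)
  also have "\<dots> = (\<Sum>a\<in>?S. Poly_Mapping.lookup x a * g a) + (\<Sum>a\<in>?S. Poly_Mapping.lookup y a * g a)"
    by (simp add: lookup_add distrib_right sum.distrib)
  also have "\<dots> = linear_ext g x + linear_ext g y"
    using linear_ext_superset[OF f, of x g] linear_ext_superset[OF f, of y g] by auto
  finally show ?thesis .
qed

lemma linear_ext_zero: "linear_ext g 0 = 0"
  unfolding linear_ext_def by simp

lemma linear_ext_single: "linear_ext g (Poly_Mapping.single c v) = v * g c"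
  unfolding linear_ext_def by simp

lemma linear_ext_sum: "finite A \<Longrightarrow> linear_ext g (\<Sum>i\<in>A. f i) = (\<Sum>i\<in>A. linear_ext g (f i))"
  by (induction A rule: finite_induct) (simp_all add: linear_ext_zero linear_ext_add)

lemma linear_ext_scale:
  "linear_ext g (Poly_Mapping.map (\<lambda>t. (c::'k::comm_semiring_1) * t) x) = c * linear_ext g x"
proof -
  have lookup_scale: "Poly_Mapping.lookup (Poly_Mapping.map (\<lambda>t. c * t) x) a = c * Poly_Mapping.lookup x a"
    for a by (simp add: map.rep_eq when_def)
  have "Poly_Mapping.keys (Poly_Mapping.map (\<lambda>t. c * t) x) \<subseteq> Poly_Mapping.keys x"
    by (metis (no_types, lifting) in_keys_iff lookup_scale mult_zero_right subsetI)
  then have "linear_ext g (Poly_Mapping.map (\<lambda>t. c * t) x)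
      = (\<Sum>a\<in>Poly_Mapping.keys x. Poly_Mapping.lookup (Poly_Mapping.map (\<lambda>t. c * t) x) a * g a)"
    by (rule linear_ext_superset[OF finite_keys])
  then show ?thesis unfolding linear_ext_def lookup_scale by (simp add: sum_distrib_left mult.assoc)
qed

abbreviation ppc_pair :: "'k::field \<Rightarrow> ppc \<Rightarrow> ppc \<Rightarrow> 'k" where
  "ppc_pair q a b \<equiv> pp_pair q (rep a) (rep b)"

lemma form_linear_ext: "form q x y = linear_ext (\<lambda>a. linear_ext (\<lambda>b. ppc_pair q a b) y) x"
  unfolding form_def linear_ext_def by (simp add: sum_distrib_left mult.assoc mult.left_commute)

lemma form_basis_right: "form q x (basis c) = linear_ext (\<lambda>a. ppc_pair q a c) x"
  unfolding form_linear_ext basis_def linear_ext_single by simp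

lemma tform_linear_ext:
  "tform q x y t = linear_ext (\<lambda>cd. form q x (basis (fst cd)) * form q y (basis (snd cd))) t"
  unfolding tform_def linear_ext_def by (simp add: mult.assoc)

lemma form_commute: "form q x y = form q y x"
proof -
  have "form q x y = (\<Sum>a\<in>Poly_Mapping.keys x. \<Sum>b\<in>Poly_Mapping.keys y.
      Poly_Mapping.lookup y b * Poly_Mapping.lookup x a * ppc_pair q b a)"
    unfolding form_def
  proof (intro sum.cong refl)
    fix a b show "Poly_Mapping.lookup x a * Poly_Mapping.lookup y b * ppc_pair q a b =
        Poly_Mapping.lookup y b * Poly_Mapping.lookup x a * ppc_pair q b a"
      using pp_pair_commute[OF plane_poset_rep plane_poset_rep, of q a b] by (simp add: mult.commute)
  qed
  also have "\<dots> = form q y x" unfolding form_def by (rule sum.swap)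
  finally show ?thesis .
qed

lemma ppc_pair_class_of_pp_prod:
  "ppc_pair q (class_of (pp_prod (rep a) (rep b))) d =
   (\<Sum>I\<in>{I. biideal (rep d) I}. q ^ hcount (rep d) (car (rep d) - I) I *
      ppc_pair q a (class_of (restr (rep d) (car (rep d) - I))) * ppc_pair q b (class_of (restr (rep d) I)))"
proof -
  have "ppc_pair q (class_of (pp_prod (rep a) (rep b))) d = pp_pair q (pp_prod (rep a) (rep b)) (rep d)"
    by (rule pp_pair_class_of_left[OF plane_poset_pp_prod[OF plane_poset_rep plane_poset_rep] plane_poset_rep])
  also have "\<dots> = (\<Sum>I\<in>{I. biideal (rep d) I}. q ^ hcount (rep d) (car (rep d) - I) I *
      pp_pair q (rep a) (restr (rep d) (car (rep d) - I)) * pp_pair q (rep b) (restr (rep d) I))"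
    by (rule pp_pair_pp_prod[OF plane_poset_rep plane_poset_rep plane_poset_rep])
  also have "\<dots> = (\<Sum>I\<in>{I. biideal (rep d) I}. q ^ hcount (rep d) (car (rep d) - I) I *
      ppc_pair q a (class_of (restr (rep d) (car (rep d) - I))) * ppc_pair q b (class_of (restr (rep d) I)))"
  proof (rule sum.cong[OF refl])
    fix I assume "I \<in> {I. biideal (rep d) I}"
    then have "I \<subseteq> car (rep d)" unfolding biideal_def by auto
    then have "plane_poset (restr (rep d) (car (rep d) - I))" "plane_poset (restr (rep d) I)"
      using plane_poset_restr[OF plane_poset_rep] by auto
    then show "q ^ hcount (rep d) (car (rep d) - I) I *
        pp_pair q (rep a) (restr (rep d) (car (rep d) - I)) * pp_pair q (rep b) (restr (rep d) I) =
      q ^ hcount (rep d) (car (rep d) - I) I *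
        ppc_pair q a (class_of (restr (rep d) (car (rep d) - I))) * ppc_pair q b (class_of (restr (rep d) I))"
      by (simp add: pp_pair_class_of_right[OF plane_poset_rep])
  qed
  finally show ?thesis .
qed

lemma form_hmult: "form q (hmult x y) z = tform q x y (delta q z)"
proof -
  let ?kx = "Poly_Mapping.keys x" and ?ky = "Poly_Mapping.keys y" and ?kz = "Poly_Mapping.keys z"
  let ?x = "Poly_Mapping.lookup x" and ?y = "Poly_Mapping.lookup y" and ?z = "Poly_Mapping.lookup z"
  let ?E = "\<lambda>d. {I. biideal (rep d) I}"
  let ?h = "\<lambda>d I. q ^ hcount (rep d) (car (rep d) - I) I"
  let ?C1 = "\<lambda>d I. class_of (restr (rep d) (car (rep d) - I))"
  let ?C2 = "\<lambda>d I. class_of (restr (rep d) I)"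
  define F where "F a b d I = ?x a * ?y b * ?z d * (?h d I * ppc_pair q a (?C1 d I) * ppc_pair q b (?C2 d I))"
    for a b d I
  have "form q (hmult x y) z = (\<Sum>a\<in>?kx. \<Sum>b\<in>?ky. ?x a * ?y b *
      linear_ext (\<lambda>d. ppc_pair q (class_of (pp_prod (rep a) (rep b))) d) z)"
    unfolding form_linear_ext hmult_def by (simp add: linear_ext_sum linear_ext_single)
  also have "\<dots> = (\<Sum>a\<in>?kx. \<Sum>b\<in>?ky. \<Sum>d\<in>?kz. \<Sum>I\<in>?E d. F a b d I)"
    unfolding linear_ext_def ppc_pair_class_of_pp_prod F_def
    by (simp add: sum_distrib_left mult.assoc)
  also have "\<dots> = (\<Sum>d\<in>?kz. \<Sum>I\<in>?E d. \<Sum>a\<in>?kx. \<Sum>b\<in>?ky. F a b d I)"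
    by (subst sum.swap, subst (2) sum.swap, simp add: sum.swap[of _ _ ?ky])
  also have "\<dots> = (\<Sum>d\<in>?kz. ?z d * (\<Sum>I\<in>?E d. ?h d I *
      (linear_ext (\<lambda>a. ppc_pair q a (?C1 d I)) x * linear_ext (\<lambda>b. ppc_pair q b (?C2 d I)) y)))"
    unfolding F_def linear_ext_def by (simp add: sum_distrib_left sum_distrib_right sum_product mult_ac)
  also have "\<dots> = tform q x y (delta q z)"
    using finite_biideals[OF plane_poset_rep]
    unfolding tform_linear_ext delta_def delta_basis_def Let_def form_basis_right
    by (simp add: linear_ext_sum linear_ext_scale linear_ext_single)
  finally show ?thesis .
qed

section \<open>Nondegeneracy\<close>

lemma iota_simps [simp]: "car (iota P) = car P" "relh (iota P) = relr P" "relr (iota P) = relh P"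
  by (simp_all add: iota_def car_def relh_def relr_def)

lemma plane_poset_iota: "plane_poset P \<Longrightarrow> plane_poset (iota P)"
  unfolding plane_poset_def iota_simps by blast

lemma rank_iota: "rank (iota P) = rank P"
proof -
  have "tle (iota P) = tle P" unfolding tle_def by (auto simp: fun_eq_iff)
  then show ?thesis unfolding rank_def tlt_def by simp
qed

lemma hcode_iota:
  assumes P: "plane_poset P"
  shows "hcode (iota P) = triangle (card (car P)) - hcode P"
proof -
  let ?n = "card (car P)"
  have iP: "plane_poset (iota P)" by (rule plane_poset_iota[OF P])
  have "\<forall>x\<in>car P. \<forall>y\<in>car P.
      (rank P x, rank P y) \<in> hcode (iota P) \<longleftrightarrow> (rank P x, rank P y) \<in> triangle ?n - hcode P"
  proof (intro ballI)
    fix x y assume xy: "x \<in> car P" "y \<in> car P"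
    have "(rank P x, rank P y) \<in> hcode (iota P) \<longleftrightarrow> (x,y) \<in> relr P \<and> x \<noteq> y"
      using rank_pair_in_hcode_iff[OF iP, of x y] xy unfolding rank_iota lth_def by simp
    also have "\<dots> \<longleftrightarrow> (rank P x, rank P y) \<in> triangle ?n - hcode P"
      using relr_iff_hcode[OF P xy] by (auto simp: triangle_def)
    finally show "(rank P x, rank P y) \<in> hcode (iota P) \<longleftrightarrow>
        (rank P x, rank P y) \<in> triangle ?n - hcode P" .
  qed
  then have all: "\<forall>i<?n. \<forall>j<?n. (i,j) \<in> hcode (iota P) \<longleftrightarrow> (i,j) \<in> triangle ?n - hcode P"
    by (rule ball_rank_pairs_iff[OF P, THEN iffD1])
  have "hcode (iota P) \<subseteq> triangle ?n" using hcode_subset_triangle[OF iP] by simp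
  then have "hcode (iota P) \<union> (triangle ?n - hcode P) \<subseteq> {..<?n} \<times> {..<?n}"
    unfolding triangle_def by auto
  then show ?thesis using all by fast
qed

text \<open>Take a basis element a0 of the support of x whose h-code is smallest. Pairing with the
  class of iota(rep a0) singles it out: a basis element b pairs nontrivially with it only if
  hcode b \<subseteq> hcode a0, which by minimality forces b = a0.\<close>

lemma form_left_nondegenerate:
  fixes q :: "'k::field" and x :: "'k hpp"
  assumes q: "q \<noteq> 0" and x: "x \<noteq> 0"
  shows "\<exists>y. form q x y \<noteq> 0"
proof -
  obtain a0 where a0: "a0 \<in> Poly_Mapping.keys x"
    and min: "\<And>a. a \<in> Poly_Mapping.keys x \<Longrightarrow> card (hcode (rep a0)) \<le> card (hcode (rep a))"
    using x ex_has_least_nat[of "\<lambda>a. a \<in> Poly_Mapping.keys x" _ "\<lambda>a. card (hcode (rep a))"]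
    by (metis all_not_in_conv keys_eq_empty)
  define P0 where "P0 = rep a0"
  have P0: "plane_poset P0" unfolding P0_def by (rule plane_poset_rep)
  have iP0: "plane_poset (iota P0)" by (rule plane_poset_iota[OF P0])
  define c0 where "c0 = class_of (iota P0)"
  let ?T = "triangle (card (car P0))"
  have pair_c0: "ppc_pair q a c0 = (if card (car (rep a)) = card (car P0) \<and> hcode (rep a) \<inter> (?T - hcode P0) = {}
      then q ^ (card (hcode (rep a)) + card (hcode (iota P0))) else 0)" for a
    unfolding c0_def pp_pair_class_of_right[OF plane_poset_rep iP0] pp_pair_hcode[OF plane_poset_rep iP0]
      hcode_iota[OF P0] iota_simps ..
  have others: "ppc_pair q a c0 = 0" if a: "a \<in> Poly_Mapping.keys x - {a0}" for a
  proof (rule ccontr)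
    assume "ppc_pair q a c0 \<noteq> 0"
    then have c: "card (car (rep a)) = card (car P0)" "hcode (rep a) \<inter> (?T - hcode P0) = {}"
      using pair_c0[of a] by (auto split: if_splits)
    then have "hcode (rep a) \<subseteq> hcode P0" using hcode_subset_triangle[OF plane_poset_rep, of a] by auto
    moreover have "card (hcode P0) \<le> card (hcode (rep a))" using min a unfolding P0_def by blast
    ultimately have "hcode (rep a) = hcode P0" using finite_hcode[OF P0] by (metis card_seteq)
    then show False using ppc_eqI[of a a0] c(1) a unfolding P0_def by simp
  qed
  have "form q x (basis c0) = Poly_Mapping.lookup x a0 * ppc_pair q a0 c0"
    unfolding form_basis_right linear_ext_def
    using a0 others by (simp add: sum.remove sum.neutral)
  moreover have "Poly_Mapping.lookup x a0 \<noteq> 0" using a0 by (simp add: in_keys_iff)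
  moreover have "ppc_pair q a0 c0 \<noteq> 0" using pair_c0[of a0] q unfolding P0_def by auto
  ultimately show ?thesis by (intro exI[of _ "basis c0"]) simp
qed

definition two_chain :: ppos where
  "two_chain = ({0,1}, {(0,0),(1,1),(0,1)}, {(0,0),(1,1)})"

lemma plane_poset_two_chain: "plane_poset two_chain"
  unfolding plane_poset_def two_chain_def car_def relh_def relr_def partial_order_on_def
    preorder_on_def refl_on_def trans_def antisym_def by auto

lemma hcode_two_chain_nonempty: "hcode two_chain \<noteq> {}"
  unfolding hcode_def hpairs_def lth_def two_chain_def car_def relh_def by auto

lemma not_nondegenerate_0: "\<not> nondegenerate (0::'k::field)"
proof
  assume nd: "nondegenerate (0::'k)"
  define c where "c = class_of two_chain"
  have "ppc_pair (0::'k) a c = 0" for a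
    unfolding c_def pp_pair_class_of_right[OF plane_poset_rep plane_poset_two_chain]
      pp_pair_hcode[OF plane_poset_rep plane_poset_two_chain]
    using hcode_two_chain_nonempty finite_hcode[OF plane_poset_two_chain] by (simp add: card_gt_0_iff)
  then have "form (0::'k) y (basis c) = 0" for y
    unfolding form_basis_right linear_ext_def by simp
  then have "basis c = (0::'k hpp)" using nd form_commute unfolding nondegenerate_def by metis
  then have "Poly_Mapping.lookup (basis c) c = (0::'k)" by simp
  then show False unfolding basis_def by simp
qed

theorem theorem23:
  fixes q :: "'k::field"
  shows "(\<forall>x y :: 'k hpp. form q x y = form q y x)
       \<and> (\<forall>x y z :: 'k hpp. form q (hmult x y) z = tform q x y (delta q z))
       \<and> (nondegenerate q \<longleftrightarrow> q \<noteq> 0)"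
proof (intro conjI allI)
  show "nondegenerate q \<longleftrightarrow> q \<noteq> 0"
    using not_nondegenerate_0 form_left_nondegenerate form_commute
    unfolding nondegenerate_def by metis
qed (rule form_commute, rule form_hmult)

end
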